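(* Let $S\subseteq\Sigma^n$ be a complementable double-code and $i,i'\in[n]$. Then $\backslash_i\backslash_{i'}S=\backslash_{i'}\backslash_i S$.
   Context: Let $\Sigma=\{0,1,2,3\}$, $[n]=\{1,\ldots,n\}$. An $i$-line of $\Sigma^n$ is a set of the four words that agree in all coordinates except the $i$th; a line is an $i$-line for some $i$. A double-code is a set meeting every line in $0$ or $2$ elements; a double-MDS-code is a set meeting every line in exactly $2$ elements; a double-code is complementable if contained in a double-MDS-code. For $S\subseteq\Sigma^n$ and $i\in[n]$, $\mathcal E_i(S)$ is the union of all $i$-lines that meet $S$, and $\backslash_i S=\mathcal E_i(S)\setminus S$. *)

theory Defs
  imports Main
begin

text \<open>Words of Sigma^n with Sigma = {0,1,2,3}: functions nat => nat, coordinates 1..n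
  take values < 4, all other coordinates are 0.\<close>

definition words :: "nat \<Rightarrow> (nat \<Rightarrow> nat) set" where
  "words n = {x. \<forall>j. (j \<in> {1..n} \<longrightarrow> x j < 4) \<and> (j \<notin> {1..n} \<longrightarrow> x j = 0)}"

definition iline :: "nat \<Rightarrow> (nat \<Rightarrow> nat) \<Rightarrow> (nat \<Rightarrow> nat) set" where
  "iline i x = {x(i := a) | a. a < (4::nat)}"

definition ilines :: "nat \<Rightarrow> nat \<Rightarrow> (nat \<Rightarrow> nat) set set" where
  "ilines n i = {iline i x | x. x \<in> words n}"

definition lines :: "nat \<Rightarrow> (nat \<Rightarrow> nat) set set" where
  "lines n = (\<Union>i\<in>{1..n}. ilines n i)"

definition double_code :: "nat \<Rightarrow> (nat \<Rightarrow> nat) set \<Rightarrow> bool" where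
  "double_code n S \<longleftrightarrow> S \<subseteq> words n \<and>
     (\<forall>L\<in>lines n. card (L \<inter> S) = 0 \<or> card (L \<inter> S) = 2)"

definition double_MDS_code :: "nat \<Rightarrow> (nat \<Rightarrow> nat) set \<Rightarrow> bool" where
  "double_MDS_code n S \<longleftrightarrow> S \<subseteq> words n \<and> (\<forall>L\<in>lines n. card (L \<inter> S) = 2)"

definition complementable :: "nat \<Rightarrow> (nat \<Rightarrow> nat) set \<Rightarrow> bool" where
  "complementable n S \<longleftrightarrow> double_code n S \<and> (\<exists>M. double_MDS_code n M \<and> S \<subseteq> M)"

definition ext :: "nat \<Rightarrow> nat \<Rightarrow> (nat \<Rightarrow> nat) set \<Rightarrow> (nat \<Rightarrow> nat) set" where
  "ext n i S = \<Union>{L \<in> ilines n i. L \<inter> S \<noteq> {}}"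

definition bsl :: "nat \<Rightarrow> nat \<Rightarrow> (nat \<Rightarrow> nat) set \<Rightarrow> (nat \<Rightarrow> nat) set" where
  "bsl n i S = ext n i S - S"

end

theory Submission
  imports Defs
begin

text \<open>
  Fix a word x and look at the 4 \<times> 4 plane through x spanned by the coordinates i and i'.
  Both backslash operators act inside this plane, along its columns and rows respectively,
  so it suffices to prove the planar statement. In the plane, S is a set P meeting every row
  and column in 0 or 2 points and contained in a set M meeting every row and column in
  exactly 2 points. Double counting shows that P has as many nonempty rows as nonempty
  columns, say k. If k \<le> 2, then P is a rectangle R \<times> C. The case k = 3 is impossible:
  each column in C already has both of its M-points in P, so a row outside R would have to
  place both of its M-points in the single column outside C. If k = 4, every row and column
  meets P. For a rectangle both composites equal (A - R) \<times> (B - C), and in the last case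
  both return P.
\<close>

definition bsl_fst :: "'a set \<Rightarrow> ('a \<times> 'b) set \<Rightarrow> ('a \<times> 'b) set" where
  "bsl_fst A P = A \<times> snd ` P - P"

definition bsl_snd :: "'b set \<Rightarrow> ('a \<times> 'b) set \<Rightarrow> ('a \<times> 'b) set" where
  "bsl_snd B P = fst ` P \<times> B - P"

lemma bsl_snd_conv_bsl_fst: "bsl_snd B P = (bsl_fst B (P\<inverse>))\<inverse>"
  unfolding bsl_fst_def bsl_snd_def by force

lemma bsl_fst_bsl_snd_Times:
  assumes "R \<noteq> {}" "C \<noteq> {}"
  shows "bsl_fst A (bsl_snd B (R \<times> C)) = (A - R) \<times> (B - C)"
proof -
  have "bsl_snd B (R \<times> C) = R \<times> (B - C)"
    using assms unfolding bsl_snd_def by auto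
  then show ?thesis
    using assms unfolding bsl_fst_def by (auto simp: Sigma_Diff_distrib2[symmetric])
qed

lemma bsl_snd_bsl_fst_Times:
  assumes "R \<noteq> {}" "C \<noteq> {}"
  shows "bsl_snd B (bsl_fst A (R \<times> C)) = (A - R) \<times> (B - C)"
proof -
  have "bsl_fst A (R \<times> C) = (A - R) \<times> C"
    using assms unfolding bsl_fst_def by auto
  then show ?thesis
    using assms unfolding bsl_snd_def by (auto simp: Times_Diff_distrib1[symmetric])
qed

lemma fst_image_Times_Diff:
  assumes "\<forall>a\<in>A. \<exists>b\<in>B. (a, b) \<notin> P"
  shows "fst ` (A \<times> B - P) = A"
proof
  show "A \<subseteq> fst ` (A \<times> B - P)"
  proof
    fix a assume "a \<in> A"
    with assms obtain b where "(a, b) \<in> A \<times> B - P" by blast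
    then show "a \<in> fst ` (A \<times> B - P)" by (rule rev_image_eqI) simp
  qed
qed auto

lemma snd_image_Times_Diff:
  assumes "\<forall>b\<in>B. \<exists>a\<in>A. (a, b) \<notin> P"
  shows "snd ` (A \<times> B - P) = B"
proof
  show "B \<subseteq> snd ` (A \<times> B - P)"
  proof
    fix b assume "b \<in> B"
    with assms obtain a where "(a, b) \<in> A \<times> B - P" by blast
    then show "b \<in> snd ` (A \<times> B - P)" by (rule rev_image_eqI) simp
  qed
qed auto

lemma bsl_fst_bsl_snd_eq_self:
  assumes "P \<subseteq> A \<times> B" "fst ` P = A" "\<forall>b\<in>B. \<exists>a\<in>A. (a, b) \<notin> P"
  shows "bsl_fst A (bsl_snd B P) = P"
  using assms by (auto simp: bsl_fst_def bsl_snd_def snd_image_Times_Diff)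

lemma bsl_snd_bsl_fst_eq_self:
  assumes "P \<subseteq> A \<times> B" "snd ` P = B" "\<forall>a\<in>A. \<exists>b\<in>B. (a, b) \<notin> P"
  shows "bsl_snd B (bsl_fst A P) = P"
  using assms by (auto simp: bsl_fst_def bsl_snd_def fst_image_Times_Diff)

lemma bsl_fst_bsl_snd_commute:
  assumes "P \<subseteq> A \<times> B"
    and "P = fst ` P \<times> snd ` P \<or> fst ` P = A \<and> snd ` P = B"
    and "\<forall>a\<in>A. \<exists>b\<in>B. (a, b) \<notin> P" and "\<forall>b\<in>B. \<exists>a\<in>A. (a, b) \<notin> P"
  shows "bsl_fst A (bsl_snd B P) = bsl_snd B (bsl_fst A P)"
  using assms(2)
proof
  assume rectangle: "P = fst ` P \<times> snd ` P"
  show ?thesis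
  proof (cases "P = {}")
    case True
    then show ?thesis unfolding bsl_fst_def bsl_snd_def by simp
  next
    case False
    then show ?thesis
      using rectangle bsl_fst_bsl_snd_Times bsl_snd_bsl_fst_Times by (metis image_is_empty)
  qed
next
  assume "fst ` P = A \<and> snd ` P = B"
  with assms show ?thesis by (simp add: bsl_fst_bsl_snd_eq_self bsl_snd_bsl_fst_eq_self)
qed

lemma card_eq_mult_card_fst_image:
  assumes "finite P" "\<forall>a\<in>fst ` P. card (P `` {a}) = k"
  shows "card P = k * card (fst ` P)"
proof -
  have "P = (SIGMA a:fst ` P. P `` {a})" by force
  then have "card P = (\<Sum>a\<in>fst ` P. card (P `` {a}))"
    using assms(1) by (metis card_SigmaI finite_Image finite_imageI)
  also have "\<dots> = (\<Sum>a\<in>fst ` P. k)" using assms(2) by (intro sum.cong) auto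
  also have "\<dots> = k * card (fst ` P)" by simp
  finally show ?thesis .
qed

lemma card_fst_image_eq_card_snd_image:
  assumes "finite P" "k \<noteq> 0"
    and "\<forall>a\<in>fst ` P. card (P `` {a}) = k" "\<forall>b\<in>snd ` P. card (P\<inverse> `` {b}) = k"
  shows "card (fst ` P) = card (snd ` P)"
proof -
  have "k * card (fst ` P) = k * card (fst ` (P\<inverse>))"
    using card_eq_mult_card_fst_image[of P k] card_eq_mult_card_fst_image[of "P\<inverse>" k] assms
    by (simp add: fst_eq_Domain snd_eq_Range)
  then show ?thesis using assms(2) by (simp add: fst_eq_Domain snd_eq_Range)
qed

lemma card_Image_eq_2:
  assumes "card (P `` {a}) \<in> {0, 2}" "P `` {a} \<noteq> {}" "finite P"
  shows "card (P `` {a}) = 2"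
  using assms by (auto simp: finite_Image)

lemma rectangle_or_full:
  assumes A: "card A = 4" and B: "card B = 4" and "P \<subseteq> M" "M \<subseteq> A \<times> B"
    and P_rows: "\<forall>a\<in>A. card (P `` {a}) \<in> {0, 2}"
    and P_cols: "\<forall>b\<in>B. card (P\<inverse> `` {b}) \<in> {0, 2}"
    and M_rows: "\<forall>a\<in>A. card (M `` {a}) = 2"
    and M_cols: "\<forall>b\<in>B. card (M\<inverse> `` {b}) = 2"
  shows "P = fst ` P \<times> snd ` P \<or> fst ` P = A \<and> snd ` P = B"
proof -
  define R C where "R = fst ` P" and "C = snd ` P"
  have fin: "finite A" "finite B" using A B by (metis card.infinite zero_neq_numeral)+
  have "P \<subseteq> A \<times> B" using assms(3,4) by blast
  then have RA: "R \<subseteq> A" and CB: "C \<subseteq> B" and "finite P" and "finite M"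
    unfolding R_def C_def using assms(4) fin finite_subset by fastforce+
  have fin_RC: "finite (R \<times> C)" using RA CB fin by (blast intro: finite_subset)
  have P_sub: "P \<subseteq> R \<times> C" unfolding R_def C_def by force
  have rows2: "\<forall>a\<in>R. card (P `` {a}) = 2"
    using P_rows RA \<open>finite P\<close> by (force simp: R_def intro: card_Image_eq_2)
  have cols2: "\<forall>b\<in>C. card (P\<inverse> `` {b}) = 2"
    using P_cols CB \<open>finite P\<close> by (force simp: C_def intro: card_Image_eq_2)
  have card_P: "card P = 2 * card R"
    using card_eq_mult_card_fst_image \<open>finite P\<close> rows2 unfolding R_def by blast
  have RC: "card C = card R"
    using card_fst_image_eq_card_snd_image[OF \<open>finite P\<close> _ rows2[unfolded R_def] cols2[unfolded C_def]]
    unfolding R_def C_def by simp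
  have M_col_eq: "P\<inverse> `` {c} = M\<inverse> `` {c}" if "c \<in> C" for c
    using cols2 M_cols CB that assms(3) \<open>finite M\<close>
    by (intro card_subset_eq) (auto simp: finite_Image)
  have "card R \<le> 4" using card_mono[OF fin(1) RA] A by simp
  then consider (k0) "card R = 0" | (k1) "card R = 1" | (k2) "card R = 2" | (k3) "card R = 3"
    | (k4) "card R = 4"
    by linarith
  then show ?thesis
  proof cases
    case k0
    then have "P = {}" using \<open>finite P\<close> unfolding R_def by simp
    then show ?thesis by simp
  next
    case k1
    then show ?thesis
      using card_mono[OF fin_RC P_sub] RC card_P by (simp add: card_cartesian_product)
  next
    case k2
    then have "P = R \<times> C"
      using card_subset_eq[OF fin_RC P_sub] card_P RC by (simp add: card_cartesian_product)
    then show ?thesis unfolding R_def C_def by simp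
  next
    case k3
    then have "R \<noteq> A" using A by auto
    then obtain r where r: "r \<in> A" "r \<notin> R" using RA by blast
    have "M `` {r} \<subseteq> B - C"
    proof
      fix c assume "c \<in> M `` {r}"
      then have "c \<in> B" and "r \<in> M\<inverse> `` {c}" using assms(4) by blast+
      moreover have "c \<notin> C"
      proof
        assume "c \<in> C"
        with \<open>r \<in> M\<inverse> `` {c}\<close> have "(r, c) \<in> P" using M_col_eq by blast
        with r show False unfolding R_def by force
      qed
      ultimately show "c \<in> B - C" by blast
    qed
    then have "card (M `` {r}) \<le> card (B - C)" using fin by (simp add: card_mono)
    also have "\<dots> = 1" using B CB RC k3 fin by (simp add: card_Diff_subset finite_subset)
    finally show ?thesis using M_rows r by simp
  next
    case k4
    then have "R = A" "C = B" using RA CB A B RC fin by (simp_all add: card_subset_eq)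
    then show ?thesis unfolding R_def C_def by simp
  qed
qed

lemma bsl_fst_bsl_snd_commute_if_complementable:
  assumes A: "card A = 4" and B: "card B = 4" and "P \<subseteq> M" "M \<subseteq> A \<times> B"
    and P_rows: "\<forall>a\<in>A. card (P `` {a}) \<in> {0, 2}"
    and P_cols: "\<forall>b\<in>B. card (P\<inverse> `` {b}) \<in> {0, 2}"
    and "\<forall>a\<in>A. card (M `` {a}) = 2" "\<forall>b\<in>B. card (M\<inverse> `` {b}) = 2"
  shows "bsl_fst A (bsl_snd B P) = bsl_snd B (bsl_fst A P)"
proof (rule bsl_fst_bsl_snd_commute)
  show P_sub: "P \<subseteq> A \<times> B" using assms(3,4) by blast
  show "P = fst ` P \<times> snd ` P \<or> fst ` P = A \<and> snd ` P = B"
    by (rule rectangle_or_full[OF assms])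
  show "\<forall>a\<in>A. \<exists>b\<in>B. (a, b) \<notin> P"
  proof
    fix a assume "a \<in> A"
    then have "P `` {a} \<noteq> B" using P_rows B by fastforce
    then show "\<exists>b\<in>B. (a, b) \<notin> P" using P_sub by blast
  qed
  show "\<forall>b\<in>B. \<exists>a\<in>A. (a, b) \<notin> P"
  proof
    fix b assume "b \<in> B"
    then have "P\<inverse> `` {b} \<noteq> A" using P_cols A by fastforce
    then show "\<exists>a\<in>A. (a, b) \<notin> P" using P_sub by blast
  qed
qed

lemma fun_upd_in_words_iff:
  "x \<in> words n \<Longrightarrow> i \<in> {1..n} \<Longrightarrow> x(i := a) \<in> words n \<longleftrightarrow> a < 4"
  unfolding words_def by auto

lemma fun_upd2_in_words_iff:
  assumes "x \<in> words n" "i \<in> {1..n}" "j \<in> {1..n}" "i \<noteq> j"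
  shows "x(i := a, j := b) \<in> words n \<longleftrightarrow> a < 4 \<and> b < 4"
  using assms unfolding words_def by auto

lemma iline_fun_upd [simp]: "iline i (x(i := a)) = iline i x"
  unfolding iline_def by simp

lemma mem_ext_iff:
  assumes "i \<in> {1..n}"
  shows "x \<in> ext n i T \<longleftrightarrow> x \<in> words n \<and> (\<exists>a<4. x(i := a) \<in> T)"
proof -
  have "x \<in> ext n i T \<longleftrightarrow> (\<exists>y\<in>words n. x \<in> iline i y \<and> iline i y \<inter> T \<noteq> {})"
    unfolding ext_def ilines_def by blast
  also have "\<dots> \<longleftrightarrow> x \<in> words n \<and> iline i x \<inter> T \<noteq> {}"
  proof
    assume "\<exists>y\<in>words n. x \<in> iline i y \<and> iline i y \<inter> T \<noteq> {}"
    then obtain y a where "y \<in> words n" "a < 4" "x = y(i := a)" "iline i y \<inter> T \<noteq> {}"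
      unfolding iline_def by blast
    then show "x \<in> words n \<and> iline i x \<inter> T \<noteq> {}"
      using assms by (simp add: fun_upd_in_words_iff)
  next
    assume x: "x \<in> words n \<and> iline i x \<inter> T \<noteq> {}"
    then have "x(i := x i) \<in> iline i x"
      using assms fun_upd_in_words_iff unfolding iline_def by fastforce
    with x show "\<exists>y\<in>words n. x \<in> iline i y \<and> iline i y \<inter> T \<noteq> {}" by auto
  qed
  also have "\<dots> \<longleftrightarrow> x \<in> words n \<and> (\<exists>a<4. x(i := a) \<in> T)"
    unfolding iline_def by blast
  finally show ?thesis .
qed

lemma mem_bsl_iff:
  "i \<in> {1..n} \<Longrightarrow> x \<in> bsl n i T \<longleftrightarrow> x \<in> words n \<and> x \<notin> T \<and> (\<exists>a<4. x(i := a) \<in> T)"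
  unfolding bsl_def by (auto simp: mem_ext_iff)

lemma bsl_subset_words: "i \<in> {1..n} \<Longrightarrow> bsl n i T \<subseteq> words n"
  by (auto simp: mem_bsl_iff)

definition plane :: "(nat \<Rightarrow> nat) \<Rightarrow> nat \<Rightarrow> nat \<Rightarrow> (nat \<Rightarrow> nat) set \<Rightarrow> (nat \<times> nat) set" where
  "plane x i j T = {(a, b). x(i := a, j := b) \<in> T}"

lemma mem_plane_self: "(x i, x j) \<in> plane x i j T \<longleftrightarrow> x \<in> T"
  unfolding plane_def by simp

lemma converse_plane: "i \<noteq> j \<Longrightarrow> (plane x i j T)\<inverse> = plane x j i T"
  unfolding plane_def by (auto simp: fun_upd_twist)

lemma plane_mono: "T \<subseteq> U \<Longrightarrow> plane x i j T \<subseteq> plane x i j U"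
  unfolding plane_def by blast

lemma plane_subset:
  assumes "T \<subseteq> words n" "i \<in> {1..n}" "j \<in> {1..n}" "i \<noteq> j"
  shows "plane x i j T \<subseteq> {..<4} \<times> {..<4}"
  using assms unfolding plane_def words_def by fastforce

lemma plane_bsl_fst:
  assumes "T \<subseteq> words n" "x \<in> words n" "i \<in> {1..n}" "j \<in> {1..n}" "i \<noteq> j"
  shows "plane x i j (bsl n i T) = bsl_fst {..<4} (plane x i j T)"
proof (rule set_eqI)
  fix p :: "nat \<times> nat"
  obtain a b where p: "p = (a, b)" by fastforce
  let ?P = "plane x i j T"
  have upd: "x(j := b, i := c) = x(i := c, j := b)" for c
    using assms(5) by (simp add: fun_upd_twist)
  have "p \<in> plane x i j (bsl n i T) \<longleftrightarrow>
      a < 4 \<and> b < 4 \<and> (a, b) \<notin> ?P \<and> (\<exists>c<4. (c, b) \<in> ?P)"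
    using assms(3) fun_upd2_in_words_iff[OF assms(2-5)]
    by (simp add: p mem_bsl_iff plane_def upd)
  also have "\<dots> \<longleftrightarrow> p \<in> bsl_fst {..<4} ?P"
    using plane_subset[OF assms(1,3-5), of x] unfolding bsl_fst_def p
    by (simp add: snd_eq_Range) blast
  finally show "p \<in> plane x i j (bsl n i T) \<longleftrightarrow> p \<in> bsl_fst {..<4} ?P" .
qed

lemma plane_bsl_snd:
  assumes "T \<subseteq> words n" "x \<in> words n" "i \<in> {1..n}" "j \<in> {1..n}" "i \<noteq> j"
  shows "plane x i j (bsl n j T) = bsl_snd {..<4} (plane x i j T)"
proof -
  have "plane x i j (bsl n j T) = (plane x j i (bsl n j T))\<inverse>"
    using assms(5) by (simp add: converse_plane)
  also have "\<dots> = (bsl_fst {..<4} (plane x j i T))\<inverse>"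
    using assms by (simp add: plane_bsl_fst)
  also have "\<dots> = bsl_snd {..<4} (plane x i j T)"
    using assms(5) by (simp add: bsl_snd_conv_bsl_fst converse_plane)
  finally show ?thesis .
qed

lemma card_plane_Image:
  assumes "T \<subseteq> words n" "j \<in> {1..n}"
  shows "card (plane x i j T `` {a}) = card (iline j (x(i := a)) \<inter> T)"
proof -
  have "iline j (x(i := a)) \<inter> T = (\<lambda>b. x(i := a, j := b)) ` (plane x i j T `` {a})"
    using assms unfolding iline_def plane_def words_def by fastforce
  moreover have "inj (\<lambda>b. x(i := a, j := b))"
    by (rule injI) (metis fun_upd_same)
  ultimately show ?thesis by (simp add: card_image inj_on_subset)
qed

lemma card_plane_Image_in:
  assumes "T \<subseteq> words n" "x \<in> words n" "i \<in> {1..n}" "j \<in> {1..n}"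
    and "\<forall>L\<in>lines n. card (L \<inter> T) \<in> K"
  shows "\<forall>a\<in>{..<4}. card (plane x i j T `` {a}) \<in> K"
proof
  fix a :: nat assume "a \<in> {..<4}"
  then have "x(i := a) \<in> words n" using assms(2,3) by (simp add: fun_upd_in_words_iff)
  then have "iline j (x(i := a)) \<in> lines n"
    using assms(4) unfolding lines_def ilines_def by blast
  then show "card (plane x i j T `` {a}) \<in> K"
    using assms(5) by (simp add: card_plane_Image[OF assms(1,4)])
qed

lemma plane_bsl_fst_bsl_snd_commute:
  assumes "complementable n S" "x \<in> words n" "i \<in> {1..n}" "j \<in> {1..n}" "i \<noteq> j"
  shows "bsl_fst {..<4} (bsl_snd {..<4} (plane x i j S)) =
    bsl_snd {..<4} (bsl_fst {..<4} (plane x i j S))"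
proof -
  from assms(1) obtain M where "double_code n S" "double_MDS_code n M" "S \<subseteq> M"
    unfolding complementable_def by blast
  then have S: "S \<subseteq> words n" "\<forall>L\<in>lines n. card (L \<inter> S) \<in> {0, 2}"
    and M: "M \<subseteq> words n" "\<forall>L\<in>lines n. card (L \<inter> M) \<in> {2}"
    unfolding double_code_def double_MDS_code_def by auto
  have conv: "(plane x i j T)\<inverse> = plane x j i T" for T
    using assms(5) by (rule converse_plane)
  show ?thesis
  proof (rule bsl_fst_bsl_snd_commute_if_complementable)
    show "plane x i j S \<subseteq> plane x i j M" using \<open>S \<subseteq> M\<close> by (rule plane_mono)
    show "plane x i j M \<subseteq> {..<4} \<times> {..<4}" using M(1) assms(3-5) by (rule plane_subset)
    show "\<forall>a\<in>{..<4}. card (plane x i j S `` {a}) \<in> {0, 2}"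
      using S(1) assms(2-4) S(2) by (rule card_plane_Image_in)
    show "\<forall>b\<in>{..<4}. card ((plane x i j S)\<inverse> `` {b}) \<in> {0, 2}"
      unfolding conv using S(1) assms(2,4,3) S(2) by (rule card_plane_Image_in)
    show "\<forall>a\<in>{..<4}. card (plane x i j M `` {a}) = 2"
      using card_plane_Image_in[OF M(1) assms(2-4) M(2)] by simp
    show "\<forall>b\<in>{..<4}. card ((plane x i j M)\<inverse> `` {b}) = 2"
      using card_plane_Image_in[OF M(1) assms(2,4,3) M(2)] by (simp add: conv)
  qed simp_all
qed

theorem proposition6:
  fixes n i i' :: nat and S :: "(nat \<Rightarrow> nat) set"
  assumes "complementable n S"
    and "i \<in> {1..n}" and "i' \<in> {1..n}"
  shows "bsl n i (bsl n i' S) = bsl n i' (bsl n i S)"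
proof (cases "i = i'")
  case False
  have S_words: "S \<subseteq> words n"
    using assms(1) unfolding complementable_def double_code_def by blast
  have "x \<in> bsl n i (bsl n i' S) \<longleftrightarrow> x \<in> bsl n i' (bsl n i S)" if x: "x \<in> words n" for x
  proof -
    have "plane x i i' (bsl n i (bsl n i' S)) = bsl_fst {..<4} (bsl_snd {..<4} (plane x i i' S))"
      and "plane x i i' (bsl n i' (bsl n i S)) = bsl_snd {..<4} (bsl_fst {..<4} (plane x i i' S))"
      using S_words x assms(2,3) False by (simp_all add: plane_bsl_fst plane_bsl_snd bsl_subset_words)
    with plane_bsl_fst_bsl_snd_commute[OF assms(1) x assms(2,3) False]
    have "plane x i i' (bsl n i (bsl n i' S)) = plane x i i' (bsl n i' (bsl n i S))" by simp
    then show ?thesis by (metis mem_plane_self)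
  qed
  moreover have "bsl n i T \<subseteq> words n" "bsl n i' T \<subseteq> words n" for T
    using assms(2,3) by (simp_all add: bsl_subset_words)
  ultimately show ?thesis by blast
qed simp

end
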